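(* For every irrational $\alpha>0$ there is a constant $C=C(\alpha)>0$ such that $\delta_{\min}^{(\alpha)}(N)\le C\,N^{-1/2}$ for all integers $N\ge2$.
   Context: For irrational $\alpha>0$, the numbers $\alpha m^2+n^2$ with integers $m,n\ge 1$ are pairwise distinct; list them in increasing order as $0<\lambda_1<\lambda_2<\cdots$. For $N\ge 2$ define $\delta_{\min}^{(\alpha)}(N)=\min\{\lambda_{i+1}-\lambda_i : 1\le i<N\}$. *)

theory Defs
  imports "HOL-Analysis.Analysis"
begin

definition spec :: "real \<Rightarrow> real set" where
  "spec \<alpha> = {\<alpha> * (real m)^2 + (real n)^2 | m n :: nat. m \<ge> 1 \<and> n \<ge> 1}"

definition lam :: "real \<Rightarrow> nat \<Rightarrow> real" where
  "lam \<alpha> k = (THE x. x \<in> spec \<alpha> \<and> card {y \<in> spec \<alpha>. y < x} = k - 1)"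

definition delta_min :: "real \<Rightarrow> nat \<Rightarrow> real" where
  "delta_min \<alpha> N = Min {lam \<alpha> (i + 1) - lam \<alpha> i | i. 1 \<le> i \<and> i < N}"

end

theory Submission
  imports Defs
begin

text \<open>
  By Dirichlet's theorem, for every \<open>Q\<close> there are integers \<open>0 < k \<le> Q\<close> and \<open>h\<close> with
  \<open>\<bar>k\<alpha> - h\<bar> < 1/Q\<close>. The spectral points \<open>\<alpha>(2k-1)\<^sup>2 + (2h+1)\<^sup>2\<close> and \<open>\<alpha>(2k+1)\<^sup>2 + (2h-1)\<^sup>2\<close>
  differ by exactly \<open>8(k\<alpha> - h)\<close>, which is nonzero because \<open>\<alpha>\<close> is irrational. Both are
  \<open>O(Q\<^sup>2)\<close>, and there are at most \<open>y/\<surd>\<alpha>\<close> spectral points below \<open>y\<close>, so both are among the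
  first \<open>N = O(Q\<^sup>2)\<close> eigenvalues, and between them lies a gap of consecutive eigenvalues
  smaller than \<open>8/Q = O(1/\<surd>N)\<close>.
\<close>

definition spec_count :: "real \<Rightarrow> real \<Rightarrow> nat" where
  "spec_count \<alpha> y = card {z \<in> spec \<alpha>. z < y}"

lemma spec_nonneg: "0 \<le> \<alpha> \<Longrightarrow> x \<in> spec \<alpha> \<Longrightarrow> 0 \<le> x"
  unfolding spec_def by auto

lemma of_int_mem_spec:
  assumes "m \<noteq> 0" and "n \<noteq> 0"
  shows "\<alpha> * (of_int m)^2 + (of_int n)^2 \<in> spec \<alpha>"
proof -
  have "(of_int k :: real)^2 = (real (nat \<bar>k\<bar>))^2" for k
    by (metis of_int_abs of_nat_nat abs_ge_zero power2_abs)
  then show ?thesis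
    unfolding spec_def using assms
    by (intro CollectI exI[of _ "nat \<bar>m\<bar>"] exI[of _ "nat \<bar>n\<bar>"]) auto
qed

lemma spec_below_subset_image:
  assumes "\<alpha> > 0"
  shows "{z \<in> spec \<alpha>. z < y} \<subseteq> (\<lambda>(m, n). \<alpha> * (real m)^2 + (real n)^2) `
           ({1..nat \<lfloor>sqrt (y / \<alpha>)\<rfloor>} \<times> {1..nat \<lfloor>sqrt y\<rfloor>})"
proof
  fix z assume "z \<in> {z \<in> spec \<alpha>. z < y}"
  then obtain m n :: nat where z: "z = \<alpha> * (real m)^2 + (real n)^2" "z < y" "m \<ge> 1" "n \<ge> 1"
    unfolding spec_def by blast
  have "0 \<le> \<alpha> * (real m)^2"
    using assms by simp
  then have m: "\<alpha> * (real m)^2 \<le> y" and n: "(real n)^2 \<le> y"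
    using z zero_le_power2[of "real n"] by linarith+
  from m have "(real m)^2 \<le> y / \<alpha>"
    using assms by (simp add: field_simps)
  then have "m \<le> nat \<lfloor>sqrt (y / \<alpha>)\<rfloor>"
    by (simp add: real_le_rsqrt le_nat_floor)
  moreover from n have "n \<le> nat \<lfloor>sqrt y\<rfloor>"
    by (simp add: real_le_rsqrt le_nat_floor)
  ultimately show "z \<in> (\<lambda>(m, n). \<alpha> * (real m)^2 + (real n)^2) `
           ({1..nat \<lfloor>sqrt (y / \<alpha>)\<rfloor>} \<times> {1..nat \<lfloor>sqrt y\<rfloor>})"
    using z by force
qed

lemma finite_spec_below: "\<alpha> > 0 \<Longrightarrow> finite {z \<in> spec \<alpha>. z < y}"
  using spec_below_subset_image finite_subset by blast

lemma spec_count_le: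
  assumes "\<alpha> > 0" and "0 \<le> y"
  shows "real (spec_count \<alpha> y) \<le> y / sqrt \<alpha>"
proof -
  define A where "A = nat \<lfloor>sqrt (y / \<alpha>)\<rfloor>"
  define B where "B = nat \<lfloor>sqrt y\<rfloor>"
  have "spec_count \<alpha> y \<le> card ({1..A} \<times> {1..B})"
    unfolding spec_count_def A_def B_def
    using card_mono[OF _ spec_below_subset_image[OF assms(1)]] card_image_le
    by (meson finite_SigmaI finite_atLeastAtMost finite_imageI le_trans)
  then have "real (spec_count \<alpha> y) \<le> real A * real B"
    by (simp flip: of_nat_mult)
  also have "\<dots> \<le> sqrt (y / \<alpha>) * sqrt y"
    unfolding A_def B_def using assms by (intro mult_mono) simp_all
  also have "\<dots> = y / sqrt \<alpha>"
    using assms by (simp add: real_sqrt_divide)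
  finally show ?thesis .
qed

lemma spec_count_strict_mono:
  assumes "\<alpha> > 0" and "u \<in> spec \<alpha>" and "u < v"
  shows "spec_count \<alpha> u < spec_count \<alpha> v"
  unfolding spec_count_def
  by (rule psubset_card_mono) (use assms finite_spec_below in auto)

lemma lam_spec_count:
  assumes "\<alpha> > 0" and "x \<in> spec \<alpha>"
  shows "lam \<alpha> (Suc (spec_count \<alpha> x)) = x"
  unfolding lam_def
proof (rule the_equality)
  show "x \<in> spec \<alpha> \<and> card {y \<in> spec \<alpha>. y < x} = Suc (spec_count \<alpha> x) - 1"
    using assms by (simp add: spec_count_def)
  fix x' assume "x' \<in> spec \<alpha> \<and> card {y \<in> spec \<alpha>. y < x'} = Suc (spec_count \<alpha> x) - 1"
  then have "x' \<in> spec \<alpha>" and "spec_count \<alpha> x' = spec_count \<alpha> x"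
    by (simp_all add: spec_count_def)
  then show "x' = x"
    using spec_count_strict_mono[OF assms(1)] assms(2) by (metis linorder_neqE less_irrefl)
qed

lemma spec_successor:
  assumes "\<alpha> > 0" and "x \<in> spec \<alpha>" and "y \<in> spec \<alpha>" and "x < y"
  obtains s where "s \<in> spec \<alpha>" "x < s" "s \<le> y" "spec_count \<alpha> s = Suc (spec_count \<alpha> x)"
proof -
  define T where "T = {z \<in> spec \<alpha>. x < z \<and> z \<le> y}"
  have "finite T"
    unfolding T_def using finite_spec_below[OF assms(1), of "y + 1"] by (rule finite_subset[rotated]) auto
  moreover have "y \<in> T"
    unfolding T_def using assms by simp
  ultimately have s: "Min T \<in> T" and s_least: "\<And>z. z \<in> T \<Longrightarrow> Min T \<le> z"
    using Min_in by auto
  have "{z \<in> spec \<alpha>. z < Min T} = insert x {z \<in> spec \<alpha>. z < x}"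
    using s s_least assms(2) unfolding T_def by force
  then have "spec_count \<alpha> (Min T) = Suc (spec_count \<alpha> x)"
    unfolding spec_count_def using finite_spec_below[OF assms(1)] by simp
  with s show thesis
    using that unfolding T_def by blast
qed

lemma delta_min_le:
  assumes "1 \<le> i" and "i < N"
  shows "delta_min \<alpha> N \<le> lam \<alpha> (Suc i) - lam \<alpha> i"
  unfolding delta_min_def using assms by (intro Min_le) auto

lemma delta_min_le_diff:
  assumes "\<alpha> > 0" and "x \<in> spec \<alpha>" and "y \<in> spec \<alpha>" and "x < y"
    and "spec_count \<alpha> y < N"
  shows "delta_min \<alpha> N \<le> y - x"
proof -
  obtain s where s: "s \<in> spec \<alpha>" "x < s" "s \<le> y" and count: "spec_count \<alpha> s = Suc (spec_count \<alpha> x)"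
    using spec_successor[OF assms(1-4)] .
  define i where "i = Suc (spec_count \<alpha> x)"
  have "spec_count \<alpha> s \<le> spec_count \<alpha> y"
    using s assms(1) spec_count_strict_mono by (cases "s = y") (auto intro: less_imp_le)
  then have "i < N"
    using assms(5) count unfolding i_def by simp
  then have "delta_min \<alpha> N \<le> lam \<alpha> (Suc i) - lam \<alpha> i"
    by (intro delta_min_le) (simp_all add: i_def)
  also have "\<dots> = s - x"
    using lam_spec_count[OF assms(1)] s(1) assms(2) count unfolding i_def by metis
  finally show ?thesis
    using s by simp
qed

lemma weighted_sum_squares_le:
  fixes \<alpha> a b A B :: real
  assumes "0 \<le> \<alpha>" and "\<bar>a\<bar> \<le> A" and "\<bar>b\<bar> \<le> B"
  shows "\<alpha> * a^2 + b^2 \<le> \<alpha> * A^2 + B^2"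
proof -
  have "a^2 \<le> A^2" and "b^2 \<le> B^2"
    using power_mono[OF assms(2) abs_ge_zero, of 2] power_mono[OF assms(3) abs_ge_zero, of 2] by simp_all
  then show ?thesis
    using assms(1) by (intro add_mono mult_left_mono)
qed

lemma sum_squares_le_of_approx:
  fixes h k a b :: int
  assumes "0 \<le> \<alpha>" and "0 < k" and "k \<le> int Q" and "\<bar>of_int k * \<alpha> - of_int h\<bar> < 1 / Q"
    and "\<bar>a\<bar> \<le> 2 * k + 1" and "\<bar>b\<bar> \<le> 2 * \<bar>h\<bar> + 1"
  shows "\<alpha> * (of_int a)^2 + (of_int b)^2 \<le> (9 * \<alpha> + (2 * \<alpha> + 3)^2) * (real Q)^2"
proof -
  have Q1: "1 \<le> real Q"
    using assms(2,3) by simp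
  have "0 \<le> of_int k * \<alpha>" and "of_int k * \<alpha> \<le> real Q * \<alpha>" and "1 / real Q \<le> 1"
    using assms(1-3) Q1 by (simp_all add: mult_right_mono)
  with assms(4) have "\<bar>of_int h\<bar> < real Q * \<alpha> + 1"
    unfolding abs_less_iff by (intro conjI; linarith)
  then have "\<bar>of_int b\<bar> \<le> (2 * \<alpha> + 3) * real Q"
    using assms(6) Q1 by (auto simp: abs_le_iff abs_less_iff algebra_simps)
  moreover have "\<bar>of_int a\<bar> \<le> 3 * real Q"
    using assms(3,5) Q1 by (auto simp: abs_le_iff)
  ultimately have "\<alpha> * (of_int a)^2 + (of_int b)^2 \<le> \<alpha> * (3 * real Q)^2 + ((2 * \<alpha> + 3) * real Q)^2"
    using assms(1) by (intro weighted_sum_squares_le)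
  also have "\<dots> = (9 * \<alpha> + (2 * \<alpha> + 3)^2) * (real Q)^2"
    by (simp only: power_mult_distrib) (simp add: algebra_simps)
  finally show ?thesis .
qed

lemma spec_close_pair:
  assumes "\<alpha> > 0" and "\<alpha> \<notin> \<rat>" and "Q > 0"
  obtains x y where "x \<in> spec \<alpha>" "y \<in> spec \<alpha>" "x < y" "y - x < 8 / Q"
    "y \<le> (9 * \<alpha> + (2 * \<alpha> + 3)^2) * (real Q)^2"
proof -
  obtain h k :: int where k: "0 < k" "k \<le> int Q" and approx: "\<bar>of_int k * \<alpha> - of_int h\<bar> < 1 / Q"
    using Dirichlet_approx[OF assms(3)] by blast
  define p where "p = \<alpha> * (of_int (2 * k - 1))^2 + (of_int (2 * h + 1))^2"
  define q where "q = \<alpha> * (of_int (2 * k + 1))^2 + (of_int (2 * h - 1))^2"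
  \<comment> \<open>odd integers never vanish, so no sign condition on \<open>h\<close> is needed\<close>
  have pq: "p \<in> spec \<alpha>" "q \<in> spec \<alpha>"
    unfolding p_def q_def by (intro of_int_mem_spec; presburger)+
  have "q - p = 8 * (of_int k * \<alpha> - of_int h)"
    unfolding p_def q_def by (simp add: algebra_simps power2_eq_square)
  then have dist: "max p q - min p q = 8 * \<bar>of_int k * \<alpha> - of_int h\<bar>"
    by (simp add: max_def min_def abs_if)
  have "of_int k * \<alpha> \<noteq> of_int h"
  proof
    assume "of_int k * \<alpha> = of_int h"
    then have "\<alpha> = of_int h / of_int k"
      using k by (simp add: field_simps)
    with assms(2) show False
      by simp
  qed
  with dist have "0 < max p q - min p q"
    by simp
  then have "min p q < max p q"
    by simp
  moreover from dist approx have "max p q - min p q < 8 / Q"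
    by simp
  moreover have "p \<le> (9 * \<alpha> + (2 * \<alpha> + 3)^2) * (real Q)^2"
    unfolding p_def using k by (intro sum_squares_le_of_approx[OF _ k approx]) (use assms(1) in arith)+
  moreover have "q \<le> (9 * \<alpha> + (2 * \<alpha> + 3)^2) * (real Q)^2"
    unfolding q_def using k by (intro sum_squares_le_of_approx[OF _ k approx]) (use assms(1) in arith)+
  ultimately show thesis
    using that[of "min p q" "max p q"] pq by (simp add: min_def max_def)
qed

lemma delta_min_le_inverse:
  fixes K :: real
  assumes "\<alpha> > 0" and "\<alpha> \<notin> \<rat>" and "Q > 0"
    and K_def: "K = (9 * \<alpha> + (2 * \<alpha> + 3)^2) / sqrt \<alpha>"
    and "K * (real Q)^2 < real N"
  shows "delta_min \<alpha> N \<le> 8 / Q"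
proof -
  obtain x y where xy: "x \<in> spec \<alpha>" "y \<in> spec \<alpha>" "x < y" "y - x < 8 / Q"
    and y_le: "y \<le> (9 * \<alpha> + (2 * \<alpha> + 3)^2) * (real Q)^2"
    using spec_close_pair[OF assms(1-3)] .
  have "0 \<le> y"
    using spec_nonneg[of \<alpha> y] assms(1) xy(2) by simp
  then have "real (spec_count \<alpha> y) \<le> y / sqrt \<alpha>"
    by (rule spec_count_le[OF assms(1)])
  also have "\<dots> \<le> K * (real Q)^2"
    using y_le assms(1) unfolding K_def by (simp add: divide_right_mono)
  also have "\<dots> < real N"
    by fact
  finally have "delta_min \<alpha> N \<le> y - x"
    using delta_min_le_diff[OF assms(1) xy(1-3)] by simp
  with xy(4) show ?thesis
    by simp
qed

lemma delta_min_le_inverse_sqrt: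
  fixes K :: real
  assumes "\<alpha> > 0" and "\<alpha> \<notin> \<rat>"
    and K_def: "K = (9 * \<alpha> + (2 * \<alpha> + 3)^2) / sqrt \<alpha>"
    and "8 * K \<le> real N"
  shows "delta_min \<alpha> N \<le> 16 * sqrt (2 * K) / sqrt (real N)"
proof -
  have "K > 0"
    unfolding K_def using assms(1) by (simp add: add_pos_nonneg)
  define s where "s = sqrt (real N / (2 * K))"
  have s_sq: "s^2 = real N / (2 * K)"
    unfolding s_def using \<open>K > 0\<close> by simp
  have "2 \<le> s"
    unfolding s_def using assms(4) \<open>K > 0\<close> by (simp add: real_le_rsqrt field_simps)
  define Q where "Q = nat \<lfloor>s\<rfloor>"
  have Q_le: "real Q \<le> s" and "s - 1 < real Q"
    unfolding Q_def using \<open>2 \<le> s\<close> of_int_floor_le[of s] real_of_int_floor_gt_diff_one[of s] by simp_all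
  with \<open>2 \<le> s\<close> have Q_ge: "s / 2 \<le> real Q"
    by linarith
  then have "Q > 0"
    using \<open>2 \<le> s\<close> by simp
  have "K * (real Q)^2 \<le> K * s^2"
    using Q_le \<open>K > 0\<close> by (simp add: power_mono)
  also have "\<dots> = real N / 2"
    using s_sq \<open>K > 0\<close> by (simp add: field_simps)
  also have "\<dots> < real N"
    using assms(4) \<open>K > 0\<close> by linarith
  finally have "delta_min \<alpha> N \<le> 8 / Q"
    using delta_min_le_inverse[OF assms(1,2) \<open>Q > 0\<close> K_def] by simp
  also have "\<dots> \<le> 16 / s"
    using Q_ge \<open>2 \<le> s\<close> by (simp add: field_simps)
  also have "\<dots> = 16 * sqrt (2 * K) / sqrt (real N)"
    unfolding s_def by (simp add: real_sqrt_divide)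
  finally show ?thesis .
qed

lemma bound_by_inverse_sqrt_from_eventual:
  fixes f :: "nat \<Rightarrow> real"
  assumes "C\<^sub>0 > 0" and bounded: "\<forall>N \<ge> 2. f N \<le> D"
    and eventual: "\<forall>N. M \<le> real N \<longrightarrow> f N \<le> C\<^sub>0 / sqrt (real N)"
  shows "\<exists>C > 0. \<forall>N \<ge> 2. f N \<le> C / sqrt (real N)"
proof (intro exI conjI allI impI)
  define C where "C = max C\<^sub>0 (\<bar>D\<bar> * sqrt M)"
  show "C > 0"
    unfolding C_def using assms(1) by simp
  fix N :: nat
  assume "N \<ge> 2"
  show "f N \<le> C / sqrt (real N)"
  proof (cases "M \<le> real N")
    case True
    with eventual have "f N \<le> C\<^sub>0 / sqrt (real N)"
      by blast
    also have "\<dots> \<le> C / sqrt (real N)"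
      unfolding C_def by (intro divide_right_mono) simp_all
    finally show ?thesis .
  next
    case False
    have "f N \<le> \<bar>D\<bar>"
      using bounded \<open>N \<ge> 2\<close> abs_ge_self order_trans by blast
    also have "\<dots> = \<bar>D\<bar> * sqrt (real N) / sqrt (real N)"
      using \<open>N \<ge> 2\<close> by simp
    also have "\<dots> \<le> C / sqrt (real N)"
      unfolding C_def using False by (intro divide_right_mono) (simp_all add: le_max_iff_disj mult_left_mono)
    finally show ?thesis .
  qed
qed

theorem proposition2p2:
  fixes \<alpha> :: real
  assumes "\<alpha> > 0" and "\<alpha> \<notin> \<rat>"
  shows "\<exists>C > 0. \<forall>N :: nat. N \<ge> 2 \<longrightarrow> delta_min \<alpha> N \<le> C * (real N) powr (-1/2)"
proof -
  define K where "K = (9 * \<alpha> + (2 * \<alpha> + 3)^2) / sqrt \<alpha>"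
  have bounded: "\<forall>N \<ge> 2. delta_min \<alpha> N \<le> lam \<alpha> 2 - lam \<alpha> 1"
    using delta_min_le[of 1] by (simp add: numeral_2_eq_2)
  have eventual: "\<forall>N. 8 * K \<le> real N \<longrightarrow> delta_min \<alpha> N \<le> 16 * sqrt (2 * K) / sqrt (real N)"
    using delta_min_le_inverse_sqrt[OF assms K_def] by blast
  have "16 * sqrt (2 * K) > 0"
    unfolding K_def using assms(1) by (simp add: add_pos_nonneg)
  then obtain C where "C > 0" and C: "\<forall>N \<ge> 2. delta_min \<alpha> N \<le> C / sqrt (real N)"
    using bound_by_inverse_sqrt_from_eventual[OF _ bounded eventual] by blast
  have "C / sqrt (real N) = C * real N powr (-1/2)" if "N \<ge> 2" for N :: nat
    using that by (simp add: powr_minus_divide powr_half_sqrt[symmetric])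
  with \<open>C > 0\<close> C show ?thesis
    by auto
qed

end
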